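(* For all integers $l\ge1$ and $n\ge2$, $$\beth(2,l,n)\le \frac{(2l-1)(n-1)(n-2)}{2}.$$
   Context: Fix a totally ordered alphabet $a_1<\dots<a_l$. A word is primitive if it is not of the form $v^k$ with $k>1$. A system of type $X(t,l)$ is a finite sequence $(w_1,\dots,w_N)$ of primitive words of length $t$ over this alphabet, no two of which are cyclic shifts of each other. For $1\le i\le N$, $1\le j\le t$, let $w(i,j)$ be the cyclic shift of $w_i$ beginning with its $j$-th letter. Define a strict partial order on the pairs $(i,j)$ by $(i_1,j_1)\prec(i_2,j_2)$ iff $i_1<i_2$ and $w(i_1,j_1)$ is lexicographically smaller than $w(i_2,j_2)$. The system is $n$-light if there are no $n$ pairwise $\prec$-incomparable pairs. $\beth(t,l,n)$ denotes the largest $N$ of an $n$-light system of type $X(t,l)$. *)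

theory Defs
  imports Complex_Main
begin

text \<open>Alphabet a_1 < ... < a_l is modelled as the letters 0 < 1 < ... < l-1 (type nat).
Words are lists; the j-th letter is 0-indexed.\<close>

definition primitive :: "nat list \<Rightarrow> bool" where
  "primitive w \<longleftrightarrow> \<not> (\<exists>v k. k > 1 \<and> w = concat (replicate k v))"

definition cyc_shift :: "nat list \<Rightarrow> nat list \<Rightarrow> bool" where
  "cyc_shift u v \<longleftrightarrow> (\<exists>k. v = rotate k u)"

definition system_X :: "nat \<Rightarrow> nat \<Rightarrow> nat list list \<Rightarrow> bool" where
  "system_X t l ws \<longleftrightarrow>
     (\<forall>i < length ws. length (ws ! i) = t \<and> set (ws ! i) \<subseteq> {..<l} \<and> primitive (ws ! i)) \<and>
     (\<forall>i < length ws. \<forall>j < length ws. i \<noteq> j \<longrightarrow> \<not> cyc_shift (ws ! i) (ws ! j))"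

definition wshift :: "nat list list \<Rightarrow> nat \<Rightarrow> nat \<Rightarrow> nat list" where
  "wshift ws i j = rotate j (ws ! i)"

definition prec :: "nat list list \<Rightarrow> nat \<times> nat \<Rightarrow> nat \<times> nat \<Rightarrow> bool" where
  "prec ws p q \<longleftrightarrow> fst p < fst q \<and> ord_class.lexordp (wshift ws (fst p) (snd p)) (wshift ws (fst q) (snd q))"

definition pairs :: "nat \<Rightarrow> nat list list \<Rightarrow> (nat \<times> nat) set" where
  "pairs t ws = {..<length ws} \<times> {..<t}"

definition n_light :: "nat \<Rightarrow> nat \<Rightarrow> nat list list \<Rightarrow> bool" where
  "n_light t n ws \<longleftrightarrow>
     \<not> (\<exists>S \<subseteq> pairs t ws. card S = n \<and> (\<forall>p\<in>S. \<forall>q\<in>S. \<not> prec ws p q))"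

definition beth :: "nat \<Rightarrow> nat \<Rightarrow> nat \<Rightarrow> nat" where
  "beth t l n = Max {N. \<exists>ws. length ws = N \<and> system_X t l ws \<and> n_light t n ws}"

end

theory Submission
  imports Defs
begin

text \<open>Order the pairs \<open>(i, j)\<close> by \<open>q \<sqsubset> p\<close> iff \<open>i\<^sub>q \<le> i\<^sub>p\<close> and \<open>w(q) > w(p)\<close>. Distinct pairs
carry distinct words, so two distinct pairs are either \<open>\<prec>\<close>-comparable or \<open>\<sqsubset>\<close>-comparable, and
\<open>\<sqsubset>\<close>-chains are \<open>\<prec>\<close>-antichains. In an \<open>n\<close>-light system the height of a pair in \<open>\<sqsubset>\<close>
(Mirsky's argument) therefore lies in \<open>{1..n-1}\<close>, and pairs of equal height are \<open>\<prec>\<close>-comparable.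
The two rotations of a word \<open>cd\<close> get two different heights. If two words \<open>i < i'\<close> had the
same pair of heights and the same letter sum \<open>c + d\<close>, then both rotations of \<open>w\<^sub>i\<close> would be
lexicographically below rotations of \<open>w\<^sub>i'\<close>, forcing \<open>c + d < c' + d'\<close>. So a word is determined
by a 2-subset of \<open>{1..n-1}\<close> and a sum in \<open>{0..2l-2}\<close>.\<close>

definition chains_ending_at :: "('a \<Rightarrow> 'a \<Rightarrow> bool) \<Rightarrow> 'a set \<Rightarrow> 'a \<Rightarrow> 'a set set" where
  "chains_ending_at R A p = {C. C \<subseteq> A \<and> p \<in> C \<and> (\<forall>q\<in>C. q \<noteq> p \<longrightarrow> R q p) \<and>
                               (\<forall>q\<in>C. \<forall>r\<in>C. q \<noteq> r \<longrightarrow> R q r \<or> R r q)}"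

definition height :: "('a \<Rightarrow> 'a \<Rightarrow> bool) \<Rightarrow> 'a set \<Rightarrow> 'a \<Rightarrow> nat" where
  "height R A p = Max (card ` chains_ending_at R A p)"

lemma finite_chains_ending_at: "finite A \<Longrightarrow> finite (chains_ending_at R A p)"
  unfolding chains_ending_at_def by (rule finite_subset[of _ "Pow A"]) auto

lemma singleton_in_chains_ending_at: "p \<in> A \<Longrightarrow> {p} \<in> chains_ending_at R A p"
  unfolding chains_ending_at_def by auto

lemma height_ge_1:
  assumes "finite A" "p \<in> A"
  shows "1 \<le> height R A p"
proof -
  have "card {p} \<le> height R A p"
    unfolding height_def
    using finite_chains_ending_at[OF assms(1)] singleton_in_chains_ending_at[OF assms(2)]
    by (intro Max_ge finite_imageI imageI)
  then show ?thesis by simp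
qed

lemma height_le:
  assumes "finite A" "p \<in> A"
    and chains: "\<And>C. C \<subseteq> A \<Longrightarrow> (\<forall>q\<in>C. \<forall>r\<in>C. q \<noteq> r \<longrightarrow> R q r \<or> R r q) \<Longrightarrow> card C \<le> k"
  shows "height R A p \<le> k"
  unfolding height_def
  using finite_chains_ending_at[OF assms(1)] singleton_in_chains_ending_at[OF assms(2)]
  by (subst Max_le_iff) (auto simp: chains_ending_at_def intro: chains)

text \<open>Mirsky's argument: a longest chain ending at \<open>q\<close> extends by \<open>p\<close>.\<close>
lemma height_strict_mono:
  assumes "finite A" "transp R" "irreflp R" "p \<in> A" "q \<in> A" "R q p"
  shows "height R A q < height R A p"
proof -
  have "height R A q \<in> card ` chains_ending_at R A q"
    unfolding height_def
    using finite_chains_ending_at[OF assms(1)] singleton_in_chains_ending_at[OF assms(5)]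
    by (intro Max_in) auto
  then obtain C where C: "C \<in> chains_ending_at R A q" "card C = height R A q" by (metis imageE)
  have below_p: "R r p" if "r \<in> C" for r
    using C(1) that assms(2,6) unfolding chains_ending_at_def by (auto dest: transpD)
  then have "p \<notin> C" using assms(3) by (auto simp: irreflp_def)
  have "insert p C \<in> chains_ending_at R A p"
    using C(1) below_p assms(4) unfolding chains_ending_at_def by auto
  then have "card (insert p C) \<le> height R A p"
    unfolding height_def using finite_chains_ending_at[OF assms(1)] by (intro Max_ge) auto
  moreover have "finite C"
    using C(1) assms(1) finite_subset unfolding chains_ending_at_def by auto
  ultimately show ?thesis using \<open>p \<notin> C\<close> C(2) by simp
qed

lemma lexordp_rotations_sum_less:
  fixes a b c d :: nat
  assumes "ord_class.lexordp [a, b] [c, d]" "ord_class.lexordp [b, a] [d, c]"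
  shows "a + b < c + d"
  using assms by auto

lemma card_two_subsets_times_two: "card {B. B \<subseteq> {1..m} \<and> card B = 2} * 2 = m * (m - 1)"
proof -
  have "even (m * (m - 1))" by (cases m) auto
  then show ?thesis by (simp add: n_subsets choose_two)
qed

definition below :: "nat list list \<Rightarrow> nat \<times> nat \<Rightarrow> nat \<times> nat \<Rightarrow> bool" where
  "below ws q p \<longleftrightarrow> fst q \<le> fst p \<and> ord_class.lexordp (wshift ws (fst p) (snd p)) (wshift ws (fst q) (snd q))"

lemma transp_below: "transp (below ws)"
  unfolding below_def transp_def using lexordp_trans by fastforce

lemma irreflp_below: "irreflp (below ws)"
  unfolding below_def irreflp_def using lexordp_irreflexive' by fastforce

lemma below_not_prec: "below ws q p \<Longrightarrow> \<not> prec ws q p \<and> \<not> prec ws p q"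
  unfolding below_def prec_def using lexordp_antisym by fastforce

lemma finite_pairs: "finite (pairs t ws)"
  by (simp add: pairs_def)

lemma mem_pairs_2: "(i, j) \<in> pairs 2 ws \<longleftrightarrow> i < length ws \<and> (j = 0 \<or> j = 1)"
  unfolding pairs_def by auto

abbreviation pair_height :: "nat list list \<Rightarrow> nat \<times> nat \<Rightarrow> nat" where
  "pair_height ws \<equiv> height (below ws) (pairs 2 ws)"

lemma pair_height_bounds:
  assumes "n_light 2 n ws" "p \<in> pairs 2 ws"
  shows "1 \<le> pair_height ws p" "pair_height ws p \<le> n - 1"
proof -
  show "1 \<le> pair_height ws p" using height_ge_1[OF finite_pairs assms(2)] .
  show "pair_height ws p \<le> n - 1"
  proof (rule height_le[OF finite_pairs assms(2)], rule ccontr)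
    fix C assume C: "C \<subseteq> pairs 2 ws" "\<forall>q\<in>C. \<forall>r\<in>C. q \<noteq> r \<longrightarrow> below ws q r \<or> below ws r q"
      and "\<not> card C \<le> n - 1"
    then have "n \<le> card C" by simp
    then obtain S where S: "S \<subseteq> C" "card S = n" by (rule obtain_subset_with_card_n)
    have "\<not> prec ws q r" if "q \<in> S" "r \<in> S" for q r
    proof (cases "q = r")
      case False
      then have "below ws q r \<or> below ws r q" using C(2) S(1) that by blast
      then show ?thesis using below_not_prec by blast
    qed (simp add: prec_def)
    moreover have "S \<subseteq> pairs 2 ws" using S(1) C(1) by blast
    ultimately show False using assms(1) S(2) unfolding n_light_def by blast
  qed
qed

context
  fixes ws :: "nat list list" and l :: nat
  assumes sys: "system_X 2 l ws"
begin

lemma word_shape: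
  assumes "i < length ws"
  obtains c d where "ws ! i = [c, d]" "c \<noteq> d" "c < l" "d < l"
proof -
  have len: "length (ws ! i) = 2" and letters: "set (ws ! i) \<subseteq> {..<l}"
    and prim: "primitive (ws ! i)"
    using sys assms unfolding system_X_def by auto
  obtain c d where w: "ws ! i = [c, d]"
    using len by (cases "ws ! i"; cases "tl (ws ! i)") auto
  have "c \<noteq> d"
  proof
    assume "c = d"
    then have "ws ! i = concat (replicate 2 [c])" using w by (simp add: numeral_2_eq_2)
    then show False using prim unfolding primitive_def by (metis one_less_numeral_iff semiring_norm(76))
  qed
  then show thesis using that w letters by auto
qed

lemma wshift_distinct:
  assumes "p \<in> pairs 2 ws" "q \<in> pairs 2 ws" "p \<noteq> q"
  shows "wshift ws (fst p) (snd p) \<noteq> wshift ws (fst q) (snd q)"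
proof -
  obtain i j i' j' where p: "p = (i, j)" and q: "q = (i', j')" by (cases p, cases q)
  have idx: "i < length ws" "j = 0 \<or> j = 1" "i' < length ws" "j' = 0 \<or> j' = 1"
    using assms(1,2) p q by (auto simp: mem_pairs_2)
  obtain c d where w: "ws ! i = [c, d]" "c \<noteq> d" using word_shape[OF idx(1)] by blast
  obtain c' d' where w': "ws ! i' = [c', d']" using word_shape[OF idx(3)] by blast
  show ?thesis
  proof (cases "i = i'")
    case True
    then show ?thesis using assms(3) idx w p q by (auto simp: wshift_def)
  next
    case False
    then have "\<not> cyc_shift (ws ! i) (ws ! i')" using sys idx unfolding system_X_def by blast
    then have "ws ! i' \<noteq> rotate 0 (ws ! i)" "ws ! i' \<noteq> rotate 1 (ws ! i)"
      unfolding cyc_shift_def by blast+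
    then show ?thesis using idx w w' p q by (auto simp: wshift_def)
  qed
qed

lemma prec_or_below:
  assumes "p \<in> pairs 2 ws" "q \<in> pairs 2 ws" "p \<noteq> q"
  shows "prec ws p q \<or> prec ws q p \<or> below ws p q \<or> below ws q p"
  using wshift_distinct[OF assms] lexordp_linear[of "wshift ws (fst p) (snd p)" "wshift ws (fst q) (snd q)"]
  unfolding prec_def below_def by auto

lemma prec_of_pair_height_eq:
  assumes "p \<in> pairs 2 ws" "q \<in> pairs 2 ws" "pair_height ws p = pair_height ws q" "fst p < fst q"
  shows "prec ws p q"
proof -
  have "\<not> below ws p q" "\<not> below ws q p"
    using height_strict_mono[OF finite_pairs transp_below irreflp_below, of _ 2 ws] assms(1-3)
    by (metis less_irrefl)+
  then show ?thesis using prec_or_below[OF assms(1,2)] assms(4) by (auto simp: prec_def)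
qed

lemma pair_height_rotations_differ:
  assumes "i < length ws"
  shows "pair_height ws (i, 0) \<noteq> pair_height ws (i, 1)"
proof -
  have mem: "(i, 0) \<in> pairs 2 ws" "(i, 1) \<in> pairs 2 ws" using assms by (auto simp: mem_pairs_2)
  then have "below ws (i, 0) (i, 1) \<or> below ws (i, 1) (i, 0)"
    using prec_or_below[OF mem] by (auto simp: prec_def)
  then show ?thesis
    using height_strict_mono[OF finite_pairs transp_below irreflp_below, of _ 2 ws] mem
    by (metis less_irrefl)
qed

definition word_signature :: "nat \<Rightarrow> nat set \<times> nat" where
  "word_signature i = ({pair_height ws (i, 0), pair_height ws (i, 1)}, sum_list (ws ! i))"

lemma word_signature_neq:
  assumes "i < i'" "i' < length ws"
  shows "word_signature i \<noteq> word_signature i'"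
proof
  assume same: "word_signature i = word_signature i'"
  obtain c d where w: "ws ! i = [c, d]" using word_shape[of i] assms by force
  obtain c' d' where w': "ws ! i' = [c', d']" using word_shape[OF assms(2)] by blast
  let ?h = "\<lambda>j. pair_height ws (i, j)" and ?h' = "\<lambda>j. pair_height ws (i', j)"
  have sum: "c + d = c' + d'" using same w w' unfolding word_signature_def by simp
  have "{?h 0, ?h 1} = {?h' 0, ?h' 1}" using same unfolding word_signature_def by simp
  then have "?h 0 = ?h' 0 \<and> ?h 1 = ?h' 1 \<or> ?h 0 = ?h' 1 \<and> ?h 1 = ?h' 0"
    using pair_height_rotations_differ[of i] assms by (auto simp: doubleton_eq_iff)
  moreover have mem: "(i, j) \<in> pairs 2 ws" "(i', j) \<in> pairs 2 ws" if "j = 0 \<or> j = 1" for j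
    using assms that by (auto simp: mem_pairs_2)
  ultimately consider
      "prec ws (i, 0) (i', 0)" "prec ws (i, 1) (i', 1)"
    | "prec ws (i, 0) (i', 1)" "prec ws (i, 1) (i', 0)"
    using prec_of_pair_height_eq assms(1) by fastforce
  then show False
  proof cases
    case 1
    then have "ord_class.lexordp [c, d] [c', d']" "ord_class.lexordp [d, c] [d', c']"
      using w w' by (auto simp: prec_def wshift_def)
    then show False using lexordp_rotations_sum_less sum by fastforce
  next
    case 2
    then have "ord_class.lexordp [c, d] [d', c']" "ord_class.lexordp [d, c] [c', d']"
      using w w' by (auto simp: prec_def wshift_def)
    then show False using lexordp_rotations_sum_less sum by fastforce
  qed
qed

lemma word_signature_range:
  assumes "n_light 2 n ws" "i < length ws"
  shows "word_signature i \<in> {B. B \<subseteq> {1..n - 1} \<and> card B = 2} \<times> {..<2 * l - 1}"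
proof -
  obtain c d where "ws ! i = [c, d]" "c < l" "d < l" using word_shape[OF assms(2)] by blast
  moreover have "(i, j) \<in> pairs 2 ws" if "j = 0 \<or> j = 1" for j
    using assms(2) that by (auto simp: mem_pairs_2)
  ultimately show ?thesis
    using pair_height_bounds[OF assms(1)] pair_height_rotations_differ[OF assms(2)]
    unfolding word_signature_def by auto
qed

lemma length_light_system_le:
  assumes "n_light 2 n ws"
  shows "2 * length ws \<le> (2 * l - 1) * (n - 1) * (n - 2)"
proof -
  let ?S = "{B. B \<subseteq> {1..n - 1} \<and> card B = 2}"
  have "inj_on word_signature {..<length ws}"
  proof (rule inj_onI)
    fix i i' assume "i \<in> {..<length ws}" "i' \<in> {..<length ws}" "word_signature i = word_signature i'"
    then show "i = i'"
      using word_signature_neq[of i i'] word_signature_neq[of i' i]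
      by (cases i i' rule: linorder_cases) auto
  qed
  moreover have "word_signature ` {..<length ws} \<subseteq> ?S \<times> {..<2 * l - 1}"
    using word_signature_range[OF assms] by blast
  ultimately have "card {..<length ws} \<le> card (?S \<times> {..<2 * l - 1})"
    by (rule card_inj_on_le) simp
  then have "2 * length ws \<le> card ?S * 2 * (2 * l - 1)"
    by (simp add: card_cartesian_product)
  also have "card ?S * 2 = (n - 1) * (n - 2)"
    using card_two_subsets_times_two[of "n - 1"] by (simp add: numeral_2_eq_2)
  finally show ?thesis by (simp add: ac_simps)
qed

end

theorem mainTheorem16:
  fixes l n :: nat
  assumes "l \<ge> 1" and "n \<ge> 2"
  shows "real (beth 2 l n) \<le> real ((2 * l - 1) * (n - 1) * (n - 2)) / 2"
proof -
  define B where "B = (2 * l - 1) * (n - 1) * (n - 2)"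
  define M where "M = {N. \<exists>ws. length ws = N \<and> system_X 2 l ws \<and> n_light 2 n ws}"
  have bound: "2 * N \<le> B" if "N \<in> M" for N
    using that length_light_system_le unfolding M_def B_def by blast
  then have "M \<subseteq> {..B}" by fastforce
  then have "finite M" using finite_subset by blast
  moreover have "length [] \<in> M"
    unfolding M_def system_X_def n_light_def pairs_def using assms(2) by auto
  ultimately have "beth 2 l n \<in> M" unfolding beth_def M_def[symmetric] by (intro Max_in) auto
  then have "2 * beth 2 l n \<le> B" by (rule bound)
  then show ?thesis unfolding B_def by linarith
qed

end
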